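(* For a positive integer $n$, the power graph $\Gamma_{\mathbb{Z}_n}$ of the cyclic group of order $n$ has orientable genus $2$ if and only if $n=8$. Moreover, $\gamma(\Gamma_{\mathbb{Z}_n})\ge 3$ for all $n\ge 9$.
   Context: The power graph $\Gamma_G$ of a finite group $G$ has vertex set $G$, two distinct elements adjacent if one is a power of the other. $\gamma$ denotes orientable genus (least number of handles on a sphere permitting a crossing-free embedding). *)

theory Defs
  imports Main
begin

text \<open>Simple graphs: a finite vertex set V and a symmetric irreflexive adjacency E.\<close>

definition darts :: "'a set \<Rightarrow> ('a \<Rightarrow> 'a \<Rightarrow> bool) \<Rightarrow> ('a \<times> 'a) set" where
  "darts V E = {(u, v). u \<in> V \<and> v \<in> V \<and> E u v}"

definition nbrs :: "'a set \<Rightarrow> ('a \<Rightarrow> 'a \<Rightarrow> bool) \<Rightarrow> 'a \<Rightarrow> 'a set" where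
  "nbrs V E v = {u \<in> V. E v u}"

definition rotation_system :: "'a set \<Rightarrow> ('a \<Rightarrow> 'a \<Rightarrow> bool) \<Rightarrow> ('a \<Rightarrow> 'a \<Rightarrow> 'a) \<Rightarrow> bool" where
  "rotation_system V E rho \<longleftrightarrow>
     (\<forall>v\<in>V. bij_betw (rho v) (nbrs V E v) (nbrs V E v) \<and>
       (\<forall>u\<in>nbrs V E v. \<forall>w\<in>nbrs V E v. \<exists>k. (rho v ^^ k) u = w))"

definition face_perm :: "('a \<Rightarrow> 'a \<Rightarrow> 'a) \<Rightarrow> 'a \<times> 'a \<Rightarrow> 'a \<times> 'a" where
  "face_perm rho = (\<lambda>(u, v). (v, rho v u))"

definition num_faces :: "'a set \<Rightarrow> ('a \<Rightarrow> 'a \<Rightarrow> bool) \<Rightarrow> ('a \<Rightarrow> 'a \<Rightarrow> 'a) \<Rightarrow> nat" where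
  "num_faces V E rho =
     (if darts V E = {} then 1
      else card ((\<lambda>d. {(face_perm rho ^^ k) d | k. True}) ` darts V E))"

text \<open>Orientable genus of a finite connected graph, via the Heffter--Edmonds--Ringel rotation
  principle: the least g such that some rotation system has Euler characteristic 2 - 2g.\<close>
definition graph_genus :: "'a set \<Rightarrow> ('a \<Rightarrow> 'a \<Rightarrow> bool) \<Rightarrow> nat" where
  "graph_genus V E = (LEAST g::nat. \<exists>rho. rotation_system V E rho \<and>
      int (card V) - int (card (darts V E) div 2) + int (num_faces V E rho) = 2 - 2 * int g)"

text \<open>Power graph of the cyclic group Z_n = {0,...,n-1} (additive): x ~ y iff x \<noteq> y and one is
  a multiple (i.e. a power in additive notation) of the other.\<close>
definition cyc_power_adj :: "nat \<Rightarrow> nat \<Rightarrow> nat \<Rightarrow> bool" where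
  "cyc_power_adj n x y \<longleftrightarrow> x \<noteq> y \<and> ((\<exists>k::nat. y = (k * x) mod n) \<or> (\<exists>k::nat. x = (k * y) mod n))"

end

theory Submission
  imports Defs "HOL-Combinatorics.Cycles" "HOL-Combinatorics.Orbits" "HOL-Number_Theory.Cong"
begin

text \<open>The faces of the embedding given by a rotation system are the orbits of the face-tracing
  permutation, which is the product of the rotation of darts about their tails and the reversal
  of darts. Comparing the signs of these three permutations, each read off from its number of
  orbits, shows that the Euler characteristic \<open>V - E + F\<close> is always even, so the least genus is
  attained. In the power graph of \<open>\<int>\<^sub>n\<close> (\<open>n \<ge> 3\<close>) every face has at least three sides, whence
  \<open>6 (V - E + F) \<le> 6 V - 2 E\<close>. For \<open>n \<ge> 11\<close> the vertices \<open>0, \<plusminus>1, \<plusminus>a\<close>, with \<open>a\<close> a further unit,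
  are adjacent to all others, so \<open>E \<ge> 5 n - 15\<close> and the genus is at least 3; for \<open>n \<le> 10\<close> the
  edges are counted directly, and explicit rotation systems show genus at most 1 for \<open>n \<le> 7\<close> and
  genus 2 for \<open>n = 8\<close>.\<close>

section \<open>Orbits and the sign of a permutation\<close>

lemma orbit_eq_if_in_orbit: "permutation p \<Longrightarrow> y \<in> orbit p x \<Longrightarrow> orbit p y = orbit p x"
  using cyclic_on_orbit' orbit_cyclic_eq3 by fastforce

lemma orbit_transpose_comp:
  assumes p: "permutation p" and s: "p s \<noteq> s" and x: "x \<noteq> s"
  shows "orbit (transpose s (p s) \<circ> p) x = orbit p x - {s}"
proof -
  define q where "q = transpose s (p s) \<circ> p"
  have "inj p" using p permutation_bijective bij_is_inj by blast
  then have q_eq: "q z = (if z = s then s else if p z = s then p s else p z)" for z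
    by (auto simp: q_def transpose_def dest: injD)
  have q_step: "q z \<in> orbit p x - {s}" if "z \<noteq> s" "z = x \<or> z \<in> orbit p x" for z
    using that s q_eq[of z] by (auto intro: orbit.base orbit.step)
  have "orbit q x \<subseteq> orbit p x - {s}"
  proof
    fix y assume "y \<in> orbit q x"
    then show "y \<in> orbit p x - {s}"
      by induction (use x q_step in auto)
  qed
  moreover have "(if y = s then p s else y) \<in> orbit q x" if "y \<in> orbit p x" for y
    using that
  proof induction
    case base
    show ?case using orbit.base[of q x] q_eq[of x] x by auto
  next
    case (step y)
    show ?case
    proof (cases "y = s")
      case True
      then show ?thesis using step.IH s by simp
    next
      case False
      then show ?thesis using orbit.step[OF step.IH] q_eq[of y] by auto
    qed
  qed
  then have "orbit p x - {s} \<subseteq> orbit q x" by (metis (full_types) DiffE singletonI subsetI)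
  ultimately show ?thesis unfolding q_def by blast
qed

lemma inj_on_Diff_singleton_orbits:
  assumes p: "permutation p" and s: "p s \<noteq> s"
  shows "inj_on (\<lambda>X. X - {s}) (orbit p ` S)"
proof (rule inj_onI)
  fix X Y assume XY: "X \<in> orbit p ` S" "Y \<in> orbit p ` S" "X - {s} = Y - {s}"
  obtain a b where ab: "X = orbit p a" "Y = orbit p b" using XY by blast
  define z where "z = (if a = s then p s else a)"
  have "z \<in> X - {s}"
    using ab s permutation_self_in_orbit[OF p, of a] orbit.base[of p a] by (auto simp: z_def)
  then have "z \<in> orbit p a" "z \<in> orbit p b" using XY(3) ab by auto
  then show "X = Y" using ab orbit_eq_if_in_orbit[OF p] by metis
qed

lemma card_orbits_transpose_comp:
  assumes p: "p permutes S" and S: "finite S" "s \<in> S" and s: "p s \<noteq> s"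
  shows "card (orbit (transpose s (p s) \<circ> p) ` S) = Suc (card (orbit p ` S))"
proof -
  define q where "q = transpose s (p s) \<circ> p"
  have perm_p: "permutation p" using p S(1) permutation_permutes by blast
  have "q s = s" by (simp add: q_def)
  then have orbit_q_s: "orbit q s = {s}" using orbit_eq_singleton_iff by metis
  have orbit_q: "orbit q x = orbit p x - {s}" if "x \<noteq> s" for x
    unfolding q_def using orbit_transpose_comp[OF perm_p s that] .
  have "p s \<in> S" using permutes_in_image[OF p] S(2) by simp
  have orbits_q: "orbit q ` (S - {s}) = (\<lambda>X. X - {s}) ` (orbit p ` S)"
  proof (intro set_eqI iffI)
    fix X assume "X \<in> orbit q ` (S - {s})"
    then obtain x where "x \<in> S" "x \<noteq> s" "X = orbit p x - {s}" using orbit_q by blast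
    then show "X \<in> (\<lambda>X. X - {s}) ` (orbit p ` S)" by blast
  next
    fix X assume "X \<in> (\<lambda>X. X - {s}) ` (orbit p ` S)"
    then obtain y where y: "y \<in> S" "X = orbit p y - {s}" by blast
    have "orbit p s = orbit p (p s)" using permutation_orbit_step[OF perm_p] by metis
    then have "X = orbit q (if y = s then p s else y)" using y s orbit_q by auto
    then show "X \<in> orbit q ` (S - {s})" using y(1) s \<open>p s \<in> S\<close> by auto
  qed
  have "card (orbit q ` (S - {s})) = card (orbit p ` S)"
    unfolding orbits_q using inj_on_Diff_singleton_orbits[OF perm_p s] by (rule card_image)
  moreover have "orbit q ` S = insert {s} (orbit q ` (S - {s}))"
    using S(2) orbit_q_s by (metis insert_Diff image_insert)
  moreover have "{s} \<notin> orbit q ` (S - {s})"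
  proof
    assume "{s} \<in> orbit q ` (S - {s})"
    then obtain x where "x \<noteq> s" "{s} = orbit p x - {s}" using orbit_q by blast
    then show False using permutation_self_in_orbit[OF perm_p, of x] by blast
  qed
  ultimately have "card (orbit q ` S) = Suc (card (orbit p ` S))" using S(1) by simp
  then show ?thesis unfolding q_def .
qed

lemma evenperm_iff_card_orbits:
  assumes "p permutes S" "finite S"
  shows "evenperm p \<longleftrightarrow> even (card S - card (orbit p ` S))"
  using assms
proof (induction "card {x\<in>S. p x \<noteq> x}" arbitrary: p rule: less_induct)
  case less
  have perm_p: "permutation p" using less.prems permutation_permutes by blast
  show ?case
  proof (cases "\<exists>s\<in>S. p s \<noteq> s")
    case False
    then have "p = id" using less.prems(1) by (auto simp: permutes_def fun_eq_iff)
    moreover have "orbit id ` S = (\<lambda>x. {x}) ` S"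
      by (rule image_cong) (simp_all add: orbit_eq_singleton_iff)
    ultimately show ?thesis by (simp add: card_image)
  next
    case True
    then obtain s where s: "s \<in> S" "p s \<noteq> s" by blast
    define q where "q = transpose s (p s) \<circ> p"
    have "p s \<in> S" using permutes_in_image[OF less.prems(1)] s(1) by simp
    then have q: "q permutes S"
      unfolding q_def by (rule permutes_compose[OF less.prems(1) permutes_swap_id[OF s(1)]])
    have "q x = x" if "p x = x" for x
    proof -
      have "inj p" using perm_p permutation_bijective bij_is_inj by blast
      then have "p x \<noteq> p s" using that s(2) by (metis injD)
      moreover have "x \<noteq> s" using that s(2) by auto
      ultimately show ?thesis using that by (simp add: q_def transpose_def)
    qed
    moreover have "q s = s" by (simp add: q_def)
    ultimately have fewer_moved: "{x\<in>S. q x \<noteq> x} \<subset> {x\<in>S. p x \<noteq> x}" using s by auto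
    have IH: "evenperm q \<longleftrightarrow> even (card S - card (orbit q ` S))"
      using less.hyps[OF psubset_card_mono[OF _ fewer_moved] q less.prems(2)] less.prems(2) by simp
    have "\<not> evenperm (transpose s (p s))" using evenperm_swap s(2) by metis
    then have "evenperm q \<longleftrightarrow> \<not> evenperm p"
      unfolding q_def using evenperm_comp[OF permutation_swap_id perm_p] by blast
    moreover have "card (orbit q ` S) = Suc (card (orbit p ` S))"
      unfolding q_def by (rule card_orbits_transpose_comp[OF less.prems s])
    moreover have "card (orbit q ` S) \<le> card S" by (rule card_image_le[OF less.prems(2)])
    ultimately show ?thesis using IH by auto
  qed
qed

lemma card_eq_sum_card_orbits:
  assumes p: "p permutes S" and S: "finite S"
  shows "card S = sum card (orbit p ` S)"
proof -
  have perm_p: "permutation p" using p S permutation_permutes by blast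
  have "\<Union>(orbit p ` S) = S"
    using permutes_orbit_subset[OF p] permutation_self_in_orbit[OF perm_p] by blast
  moreover have "pairwise disjnt (orbit p ` S)"
  proof (rule pairwiseI)
    fix X Y assume XY: "X \<in> orbit p ` S" "Y \<in> orbit p ` S" "X \<noteq> Y"
    show "disjnt X Y"
    proof (rule ccontr)
      assume "\<not> disjnt X Y"
      then obtain z where "z \<in> X" "z \<in> Y" unfolding disjnt_def by blast
      then show False using XY orbit_eq_if_in_orbit[OF perm_p] by (metis imageE)
    qed
  qed
  moreover have "finite X" if "X \<in> orbit p ` S" for X
    using that permutes_orbit_subset[OF p] S finite_subset by blast
  ultimately show ?thesis using card_Union_disjoint by metis
qed

lemma card_orbits_mult_le:
  assumes "p permutes S" "finite S" "\<And>x. x \<in> S \<Longrightarrow> k \<le> card (orbit p x)"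
  shows "k * card (orbit p ` S) \<le> card S"
proof -
  have "k * card (orbit p ` S) = (\<Sum>X\<in>orbit p ` S. k)" by simp
  also have "\<dots> \<le> sum card (orbit p ` S)" using assms(3) by (intro sum_mono) auto
  finally show ?thesis using card_eq_sum_card_orbits[OF assms(1,2)] by simp
qed

lemma card_orbits_mult_eq:
  assumes "p permutes S" "finite S" "\<And>x. x \<in> S \<Longrightarrow> card (orbit p x) = k"
  shows "card S = k * card (orbit p ` S)"
proof -
  have "sum card (orbit p ` S) = (\<Sum>X\<in>orbit p ` S. k)" using assms(3) by (intro sum.cong) auto
  then show ?thesis using card_eq_sum_card_orbits[OF assms(1,2)] by simp
qed

lemma card_set_image_distinct_concat:
  assumes "[] \<notin> set cs" "distinct (concat cs)"
  shows "card (set ` set cs) = length cs"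
  using assms
proof (induction cs)
  case (Cons c cs)
  have "c \<noteq> []" using Cons.prems(1) by auto
  then have "hd c \<in> set c" by (rule hd_in_set)
  then have "hd c \<notin> set (concat cs)" using Cons.prems(2) by (auto simp: disjoint_iff)
  then have "set c \<notin> set ` set cs" using Cons.prems(1) by fastforce
  then show ?case using Cons by simp
qed simp

section \<open>Faces of a rotation system\<close>

definition euler_char :: "'a set \<Rightarrow> ('a \<Rightarrow> 'a \<Rightarrow> bool) \<Rightarrow> ('a \<Rightarrow> 'a \<Rightarrow> 'a) \<Rightarrow> int" where
  "euler_char V E rho = int (card V) - int (card (darts V E) div 2) + int (num_faces V E rho)"

definition face_darts :: "'a list \<Rightarrow> ('a \<times> 'a) list" where
  "face_darts vs = zip vs (rotate1 vs)"

locale rotation_system_graph =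
  fixes V :: "'a set" and E :: "'a \<Rightarrow> 'a \<Rightarrow> bool" and rho :: "'a \<Rightarrow> 'a \<Rightarrow> 'a"
  assumes finite_V: "finite V"
    and sym_E: "E u v \<Longrightarrow> E v u"
    and irrefl_E: "\<not> E v v"
    and rotation_system: "rotation_system V E rho"
begin

abbreviation "D \<equiv> darts V E"
abbreviation "N \<equiv> nbrs V E"

definition reverse_dart :: "'a \<times> 'a \<Rightarrow> 'a \<times> 'a" where
  "reverse_dart d = (if d \<in> D then prod.swap d else d)"

definition rotate_dart :: "'a \<times> 'a \<Rightarrow> 'a \<times> 'a" where
  "rotate_dart d = (if d \<in> D then (fst d, rho (fst d) (snd d)) else d)"

text \<open>On \<open>D\<close>, \<open>face_step\<close> is \<open>face_perm rho\<close>, written as a product of two permutations of \<open>D\<close>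
  whose signs are easy to compute.\<close>

definition face_step :: "'a \<times> 'a \<Rightarrow> 'a \<times> 'a" where
  "face_step = rotate_dart \<circ> reverse_dart"

lemma in_darts_iff: "(v, w) \<in> D \<longleftrightarrow> v \<in> V \<and> w \<in> N v"
  by (auto simp: darts_def nbrs_def)

lemma finite_darts: "finite D"
proof -
  have "D \<subseteq> V \<times> V" by (auto simp: darts_def)
  then show ?thesis using finite_V finite_subset by blast
qed

lemma swap_in_darts: "(u, v) \<in> D \<Longrightarrow> (v, u) \<in> D"
  using sym_E by (auto simp: darts_def)

lemma bij_betw_rho: "v \<in> V \<Longrightarrow> bij_betw (rho v) (N v) (N v)"
  using rotation_system by (simp add: rotation_system_def)

lemma rho_in_nbrs: "v \<in> V \<Longrightarrow> w \<in> N v \<Longrightarrow> rho v w \<in> N v"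
  using bij_betw_rho bij_betw_apply by metis

lemma rho_cyclic: "v \<in> V \<Longrightarrow> u \<in> N v \<Longrightarrow> w \<in> N v \<Longrightarrow> \<exists>k. (rho v ^^ k) u = w"
  using rotation_system by (simp add: rotation_system_def)

lemma reverse_dart_permutes: "reverse_dart permutes D"
proof (rule bij_imp_permutes)
  show "bij_betw reverse_dart D D"
    by (rule bij_betw_byWitness[where f' = reverse_dart]) (auto simp: reverse_dart_def swap_in_darts)
qed (simp add: reverse_dart_def)

lemma rotate_dart_permutes: "rotate_dart permutes D"
proof (rule bij_imp_permutes)
  have "rotate_dart ` D \<subseteq> D" using rho_in_nbrs by (auto simp: rotate_dart_def in_darts_iff)
  moreover have "inj_on rotate_dart D"
  proof (rule inj_onI)
    fix x y assume xy: "x \<in> D" "y \<in> D" "rotate_dart x = rotate_dart y"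
    obtain v w v' w' where x: "x = (v, w)" and y: "y = (v', w')" by fastforce
    then have "v' = v" "rho v w = rho v w'" using xy by (auto simp: rotate_dart_def)
    moreover have "v \<in> V" "w \<in> N v" "w' \<in> N v" using xy x y \<open>v' = v\<close> by (auto simp: in_darts_iff)
    ultimately show "x = y" using x y bij_betw_rho bij_betw_imp_inj_on inj_onD by metis
  qed
  ultimately show "bij_betw rotate_dart D D"
    unfolding bij_betw_def using endo_inj_surj[OF finite_darts] by blast
qed (simp add: rotate_dart_def)

lemma face_step_permutes: "face_step permutes D"
  unfolding face_step_def by (rule permutes_compose[OF reverse_dart_permutes rotate_dart_permutes])

lemma permutation_reverse_dart: "permutation reverse_dart"
  using reverse_dart_permutes finite_darts permutation_permutes by blast

lemma permutation_rotate_dart: "permutation rotate_dart"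
  using rotate_dart_permutes finite_darts permutation_permutes by blast

lemma permutation_face_step: "permutation face_step"
  using face_step_permutes finite_darts permutation_permutes by blast

lemma finite_face_orbit: "finite (orbit face_step d)"
  by (rule finite_orbit[OF permutation_self_in_orbit[OF permutation_face_step]])

lemma face_step_eq_face_perm: "d \<in> D \<Longrightarrow> face_step d = face_perm rho d"
  using swap_in_darts
  by (cases d) (auto simp: face_step_def reverse_dart_def rotate_dart_def face_perm_def)

lemma num_faces_eq_card_orbits:
  assumes "D \<noteq> {}"
  shows "num_faces V E rho = card (orbit face_step ` D)"
proof -
  have "(face_perm rho ^^ k) d = (face_step ^^ k) d \<and> (face_step ^^ k) d \<in> D" if "d \<in> D" for d k
    using that
    by (induction k) (simp_all add: face_step_eq_face_perm[symmetric] permutes_in_image[OF face_step_permutes])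
  then have "{(face_perm rho ^^ k) d | k. True} = orbit face_step d" if "d \<in> D" for d
    using that orbit_altdef_permutation[OF permutation_face_step] by simp
  then show ?thesis using assms by (simp add: num_faces_def cong: image_cong)
qed

lemma num_faces_ge_1: "1 \<le> num_faces V E rho"
  using num_faces_eq_card_orbits finite_darts by (cases "D = {}") (auto simp: num_faces_def Suc_le_eq)

lemma card_darts_eq: "card D = 2 * card (orbit reverse_dart ` D)"
proof (rule card_orbits_mult_eq[OF reverse_dart_permutes finite_darts])
  fix d assume d: "d \<in> D"
  then have "(reverse_dart ^^ 2) d = d" using swap_in_darts
    by (cases d) (auto simp: reverse_dart_def numeral_2_eq_2)
  then have "orbit reverse_dart d = {(reverse_dart ^^ m) d | m. m < 2}"
    by (rule orbit_altdef_bounded) simp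
  also have "\<dots> = {d, prod.swap d}"
  proof -
    have "{m::nat. m < 2} = {0, 1}" by auto
    then show ?thesis using d by (simp add: setcompr_eq_image reverse_dart_def)
  qed
  finally have "orbit reverse_dart d = {d, prod.swap d}" .
  moreover have "prod.swap d \<noteq> d" using d irrefl_E by (cases d) (auto simp: darts_def)
  ultimately show "card (orbit reverse_dart d) = 2" by simp
qed

lemma orbit_rotate_dart:
  assumes d: "(v, w) \<in> D"
  shows "orbit rotate_dart (v, w) = {v} \<times> N v"
proof -
  have v: "v \<in> V" "w \<in> N v" using d by (simp_all add: in_darts_iff)
  have iter: "(rotate_dart ^^ k) (v, w) = (v, (rho v ^^ k) w) \<and> (rho v ^^ k) w \<in> N v" for k
  proof (induction k)
    case (Suc k)
    then have "(v, (rho v ^^ k) w) \<in> D" using v by (simp add: in_darts_iff)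
    then show ?case using Suc v rho_in_nbrs by (simp add: rotate_dart_def)
  qed (use v in simp)
  have "orbit rotate_dart (v, w) = {(rotate_dart ^^ k) (v, w) | k. True}"
    by (rule orbit_altdef_permutation[OF permutation_rotate_dart])
  also have "\<dots> = {v} \<times> N v"
  proof (intro set_eqI iffI)
    fix x assume "x \<in> {v} \<times> N v"
    then obtain u where u: "x = (v, u)" "u \<in> N v" by blast
    then obtain k where "(rho v ^^ k) w = u" using rho_cyclic v by blast
    then have "(rotate_dart ^^ k) (v, w) = x" using iter[of k] u(1) by simp
    then show "x \<in> {(rotate_dart ^^ k) (v, w) | k. True}" by blast
  qed (use iter in auto)
  finally show ?thesis .
qed

lemma card_orbits_rotate_dart:
  assumes no_isolated: "\<And>v. v \<in> V \<Longrightarrow> N v \<noteq> {}"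
  shows "card (orbit rotate_dart ` D) = card V"
proof -
  have "orbit rotate_dart ` D = (\<lambda>v. {v} \<times> N v) ` V"
  proof (intro set_eqI iffI)
    fix X assume "X \<in> (\<lambda>v. {v} \<times> N v) ` V"
    then obtain v w where "v \<in> V" "X = {v} \<times> N v" "w \<in> N v" using no_isolated by blast
    then show "X \<in> orbit rotate_dart ` D" using orbit_rotate_dart in_darts_iff by (metis image_eqI)
  qed (use orbit_rotate_dart in_darts_iff in auto)
  moreover have "inj_on (\<lambda>v. {v} \<times> N v) V"
    using no_isolated by (intro inj_onI) blast
  ultimately show ?thesis by (simp add: card_image)
qed

lemma euler_char_even:
  assumes no_isolated: "\<And>v. v \<in> V \<Longrightarrow> N v \<noteq> {}" and "D \<noteq> {}"
  shows "even (euler_char V E rho)"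
proof -
  let ?F = "card (orbit face_step ` D)" and ?T = "card (orbit reverse_dart ` D)"
  have "evenperm face_step \<longleftrightarrow> (evenperm rotate_dart \<longleftrightarrow> evenperm reverse_dart)"
    unfolding face_step_def by (rule evenperm_comp[OF permutation_rotate_dart permutation_reverse_dart])
  moreover have "evenperm face_step \<longleftrightarrow> even (card D - ?F)"
    by (rule evenperm_iff_card_orbits[OF face_step_permutes finite_darts])
  moreover have "evenperm rotate_dart \<longleftrightarrow> even (card D - card V)"
    using evenperm_iff_card_orbits[OF rotate_dart_permutes finite_darts]
    by (simp add: card_orbits_rotate_dart[OF no_isolated])
  moreover have "evenperm reverse_dart \<longleftrightarrow> even (card D - ?T)"
    by (rule evenperm_iff_card_orbits[OF reverse_dart_permutes finite_darts])
  moreover have "?F \<le> card D" "card V \<le> card D"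
    using card_image_le[OF finite_darts] card_orbits_rotate_dart[OF no_isolated] by metis+
  ultimately have "even (int (card D) - int ?F) \<longleftrightarrow>
      (even (int (card D) - int (card V)) \<longleftrightarrow> even (int (card D) - int ?T))"
    using card_darts_eq by (simp add: of_nat_diff[symmetric] even_of_nat_iff del: of_nat_diff)
  then show ?thesis
    using card_darts_eq num_faces_eq_card_orbits[OF \<open>D \<noteq> {}\<close>] by (auto simp: euler_char_def)
qed

lemma card_face_ge_2: "d \<in> D \<Longrightarrow> 2 \<le> card (orbit face_step d)"
proof -
  assume d: "d \<in> D"
  then have "face_step d \<noteq> d" using irrefl_E
    by (cases d) (auto simp: face_step_eq_face_perm face_perm_def darts_def)
  moreover have "card {d, face_step d} \<le> card (orbit face_step d)"
    using permutation_self_in_orbit[OF permutation_face_step] orbit.base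
    by (intro card_mono finite_face_orbit) auto
  ultimately show ?thesis by simp
qed

text \<open>A face of length two is a dart \<open>(u, v)\<close> with \<open>\<rho>\<^sub>v u = u\<close> and \<open>\<rho>\<^sub>u v = v\<close>; as the rotations
  are cyclic, \<open>u\<close> and \<open>v\<close> then have no other neighbours.\<close>

lemma card_face_ge_3:
  assumes no_K2: "\<And>u v. (u, v) \<in> D \<Longrightarrow> N u = {v} \<Longrightarrow> N v = {u} \<Longrightarrow> False"
    and d: "d \<in> D"
  shows "3 \<le> card (orbit face_step d)"
proof -
  obtain u v where uv: "d = (u, v)" by fastforce
  have "(v, u) \<in> D" using d uv swap_in_darts by simp
  then have vw: "(v, rho v u) \<in> D" using rho_in_nbrs by (simp add: in_darts_iff)
  have steps: "face_step d = (v, rho v u)" "face_step (face_step d) = (rho v u, rho (rho v u) v)"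
    using uv d vw by (simp_all add: face_step_eq_face_perm face_perm_def)
  have only_nbr: "N x = {y}" if "(x, y) \<in> D" "rho x y = y" for x y
  proof -
    have fixed: "(rho x ^^ k) y = y" for k using that(2) by (induction k) auto
    have "x \<in> V" "y \<in> N x" using that(1) by (simp_all add: in_darts_iff)
    then have "z = y" if "z \<in> N x" for z using rho_cyclic that fixed by metis
    then show ?thesis using \<open>y \<in> N x\<close> by blast
  qed
  have "d \<noteq> face_step (face_step d)"
  proof
    assume "d = face_step (face_step d)"
    then have "(u, v) = (rho v u, rho (rho v u) v)" using uv steps(2) by metis
    then have "rho v u = u" "rho u v = v" by (metis prod.inject)+
    then show False using no_K2 only_nbr d uv \<open>(v, u) \<in> D\<close> by metis
  qed
  moreover have "d \<noteq> face_step d" "face_step d \<noteq> face_step (face_step d)"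
    using d vw irrefl_E uv steps by (auto simp: darts_def)
  moreover have "card {d, face_step d, face_step (face_step d)} \<le> card (orbit face_step d)"
    using permutation_self_in_orbit[OF permutation_face_step, of d] orbit.base[of face_step d]
      orbit.step[OF orbit.base[of face_step d]]
    by (intro card_mono finite_face_orbit) auto
  ultimately show ?thesis by simp
qed

lemma euler_char_le_card_V:
  assumes "D \<noteq> {}"
  shows "euler_char V E rho \<le> int (card V)"
proof -
  have "2 * card (orbit face_step ` D) \<le> card D"
    using card_orbits_mult_le[OF face_step_permutes finite_darts card_face_ge_2] .
  then show ?thesis using card_darts_eq num_faces_eq_card_orbits[OF assms]
    by (simp add: euler_char_def)
qed

lemma euler_char_le_darts:
  assumes "\<And>u v. (u, v) \<in> D \<Longrightarrow> N u = {v} \<Longrightarrow> N v = {u} \<Longrightarrow> False" and "D \<noteq> {}"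
  shows "6 * euler_char V E rho \<le> 6 * int (card V) - int (card D)"
proof -
  have "3 * card (orbit face_step ` D) \<le> card D"
    using card_orbits_mult_le[OF face_step_permutes finite_darts card_face_ge_3[OF assms(1)]] .
  then show ?thesis using card_darts_eq num_faces_eq_card_orbits[OF assms(2)]
    by (simp add: euler_char_def)
qed

lemma orbit_face_step_closed_walk:
  assumes c: "c \<noteq> []" "set c \<subseteq> D" "map (face_perm rho) c = rotate1 c"
  shows "orbit face_step (hd c) = set c"
proof -
  have step: "map face_step c = rotate1 c"
    using c face_step_eq_face_perm by (metis (mono_tags, lifting) map_eq_conv subsetD)
  have iterate: "map (face_step ^^ k) c = rotate k c" for k
  proof (induction k)
    case (Suc k)
    have "map (face_step ^^ Suc k) c = map face_step (rotate k c)" by (simp add: Suc.IH[symmetric])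
    also have "\<dots> = rotate k (map face_step c)" by (rule rotate_map[symmetric])
    also have "\<dots> = rotate (Suc k) c" by (simp add: step rotate1_rotate_swap)
    finally show ?case .
  qed simp
  have nth: "(face_step ^^ k) (hd c) = c ! (k mod length c)" for k
  proof -
    have "(face_step ^^ k) (hd c) = hd (rotate k c)" using iterate[of k] c(1) by (metis hd_map)
    then show ?thesis using c(1) by (simp add: hd_rotate_conv_nth)
  qed
  have "orbit face_step (hd c) = {(face_step ^^ k) (hd c) | k. True}"
    using orbit_altdef_permutation[OF permutation_face_step] .
  also have "\<dots> = set c"
  proof (intro set_eqI iffI)
    fix x assume "x \<in> set c"
    then obtain i where "i < length c" "x = c ! i" by (metis in_set_conv_nth)
    then have "(face_step ^^ i) (hd c) = x" using nth by simp
    then show "x \<in> {(face_step ^^ k) (hd c) | k. True}" by blast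
  qed (use c(1) nth in auto)
  finally show ?thesis .
qed

lemma num_faces_ge_closed_walks:
  assumes "D \<noteq> {}" "distinct (concat cs)"
    and "\<forall>c\<in>set cs. c \<noteq> [] \<and> set c \<subseteq> D \<and> map (face_perm rho) c = rotate1 c"
  shows "length cs \<le> num_faces V E rho"
proof -
  have "[] \<notin> set cs" using assms(3) by blast
  then have "card (set ` set cs) = length cs" using assms(2) by (rule card_set_image_distinct_concat)
  moreover have "set ` set cs \<subseteq> orbit face_step ` D"
  proof
    fix X assume "X \<in> set ` set cs"
    then obtain c where "c \<in> set cs" "X = set c" by blast
    then show "X \<in> orbit face_step ` D"
      using assms(3) orbit_face_step_closed_walk hd_in_set by (metis image_eqI subsetD)
  qed
  then have "card (set ` set cs) \<le> card (orbit face_step ` D)"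
    using finite_darts by (intro card_mono) auto
  ultimately show ?thesis using num_faces_eq_card_orbits[OF assms(1)] by simp
qed

end

lemma rotation_system_cycle_of_list:
  assumes "\<And>v. v \<in> V \<Longrightarrow> distinct (L v) \<and> set (L v) = nbrs V E v"
  shows "rotation_system V E (\<lambda>v. cycle_of_list (L v))"
  unfolding rotation_system_def
proof (intro ballI conjI)
  fix v assume "v \<in> V"
  then have L: "distinct (L v)" "set (L v) = nbrs V E v" using assms by auto
  then show "bij_betw (cycle_of_list (L v)) (nbrs V E v) (nbrs V E v)"
    using permutes_imp_bij[OF cycle_permutes] by metis
  fix u w assume "u \<in> nbrs V E v" "w \<in> nbrs V E v"
  then obtain i j where ij: "i < length (L v)" "L v ! i = u" "j < length (L v)" "L v ! j = w"
    using L(2) by (metis in_set_conv_nth)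
  have "(cycle_of_list (L v) ^^ k) u = rotate k (L v) ! i" for k
    using cyclic_rotation[OF L(1), of k] ij(1,2) by (metis nth_map)
  moreover have "rotate (j + length (L v) - i) (L v) ! i = w"
    using ij by (simp add: nth_rotate)
  ultimately show "\<exists>k. (cycle_of_list (L v) ^^ k) u = w" by metis
qed

lemma rotation_system_exists:
  fixes V :: "'a::linorder set"
  assumes "finite V"
  shows "\<exists>rho. rotation_system V E rho"
  using assms rotation_system_cycle_of_list[of V "\<lambda>v. sorted_list_of_set (nbrs V E v)" E]
  by (auto simp: nbrs_def)

lemma graph_genus_le:
  assumes "rotation_system V E rho" "even (euler_char V E rho)"
    and "2 - 2 * int g \<le> euler_char V E rho" "euler_char V E rho \<le> 2"
  shows "graph_genus V E \<le> g"
proof -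
  define h where "h = nat ((2 - euler_char V E rho) div 2)"
  have "euler_char V E rho = 2 - 2 * int h" using assms(2,4) by (auto simp: h_def)
  then have "graph_genus V E \<le> h"
    unfolding graph_genus_def using assms(1) by (intro Least_le) (auto simp: euler_char_def)
  also have "h \<le> g" using assms(3) by (simp add: h_def)
  finally show ?thesis .
qed

text \<open>The rotation system \<open>rho\<^sub>0\<close> is needed because \<open>graph_genus\<close> is a \<open>LEAST\<close>, which says
  nothing when no rotation system has Euler characteristic of the form \<open>2 - 2 g\<close>.\<close>

lemma graph_genus_ge:
  assumes "rotation_system V E rho\<^sub>0" "even (euler_char V E rho\<^sub>0)"
    and "\<And>rho. rotation_system V E rho \<Longrightarrow> euler_char V E rho \<le> 2 - 2 * int g"
  shows "g \<le> graph_genus V E"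
proof -
  let ?P = "\<lambda>g. \<exists>rho. rotation_system V E rho \<and> euler_char V E rho = 2 - 2 * int g"
  have "euler_char V E rho\<^sub>0 \<le> 2" using assms(1,3) by force
  then have "?P (nat ((2 - euler_char V E rho\<^sub>0) div 2))" using assms(1,2) by auto
  then have "?P (Least ?P)" by (rule LeastI)
  then obtain rho where "rotation_system V E rho" "euler_char V E rho = 2 - 2 * int (Least ?P)"
    by blast
  moreover have "graph_genus V E = Least ?P" by (simp add: graph_genus_def euler_char_def)
  ultimately show ?thesis using assms(3) by force
qed

section \<open>The power graph of the cyclic group\<close>

lemma cyc_power_adj_0: "0 < y \<Longrightarrow> cyc_power_adj n 0 y"
  unfolding cyc_power_adj_def by (auto intro: exI[of _ 0])

lemma cyc_power_adj_coprime:
  assumes "coprime a n" "y < n" "y \<noteq> a"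
  shows "cyc_power_adj n a y"
proof -
  obtain c where c: "[a * c = Suc 0] (mod n)" using cong_solve_coprime_nat[OF assms(1)] by blast
  have "(y * c * a) mod n = (y * ((a * c) mod n)) mod n"
    by (simp add: mod_mult_right_eq ac_simps)
  also have "\<dots> = y" using c assms(2) by (simp add: cong_def mod_mult_right_eq)
  finally show ?thesis using assms(3) unfolding cyc_power_adj_def by metis
qed

lemma power_graph_rotation_system_graph:
  "rotation_system {0..<n} (cyc_power_adj n) rho \<Longrightarrow>
    rotation_system_graph {0..<n} (cyc_power_adj n) rho"
  by unfold_locales (auto simp: cyc_power_adj_def)

lemma power_graph_euler_char:
  assumes n: "2 \<le> n" and rho: "rotation_system {0..<n} (cyc_power_adj n) rho"
  shows "even (euler_char {0..<n} (cyc_power_adj n) rho)"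
    and "euler_char {0..<n} (cyc_power_adj n) rho \<le> int n"
    and "3 \<le> n \<Longrightarrow> 6 * euler_char {0..<n} (cyc_power_adj n) rho
      \<le> 6 * int n - int (card (darts {0..<n} (cyc_power_adj n)))"
proof -
  interpret rotation_system_graph "{0..<n}" "cyc_power_adj n" rho
    using power_graph_rotation_system_graph[OF rho] .
  have zero_adj: "0 \<in> N v" if "0 < v" "v < n" for v
    using cyc_power_adj_0[OF that(1)] that by (auto simp: nbrs_def cyc_power_adj_def)
  have adj_zero: "v \<in> N 0" if "0 < v" "v < n" for v
    using cyc_power_adj_0[OF that(1)] that by (auto simp: nbrs_def)
  have "(0, 1) \<in> D" using adj_zero[of 1] n by (simp add: in_darts_iff)
  then have darts_ne: "D \<noteq> {}" by blast
  have "N v \<noteq> {}" if "v \<in> {0..<n}" for v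
    using that n zero_adj adj_zero[of 1] by (cases "v = 0") auto
  then show "even (euler_char {0..<n} (cyc_power_adj n) rho)"
    using euler_char_even darts_ne by blast
  show "euler_char {0..<n} (cyc_power_adj n) rho \<le> int n"
    using euler_char_le_card_V[OF darts_ne] by simp
  assume "3 \<le> n"
  have "N 0 \<noteq> {w}" for w
  proof
    assume "N 0 = {w}"
    then have "1 = w" "2 = w" using adj_zero[of 1] adj_zero[of 2] \<open>3 \<le> n\<close> by auto
    then show False by simp
  qed
  moreover have "v = 0" if "(u, v) \<in> D" "N u = {v}" "u \<noteq> 0" for u v
  proof -
    have "0 \<in> N u" using zero_adj that(1,3) by (simp add: in_darts_iff)
    then show "v = 0" using that(2) by simp
  qed
  ultimately have no_K2: "False" if "(u, v) \<in> D" "N u = {v}" "N v = {u}" for u v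
    using that by metis
  show "6 * euler_char {0..<n} (cyc_power_adj n) rho \<le> 6 * int n - int (card D)"
    using euler_char_le_darts[OF no_K2 darts_ne] by simp
qed

lemma power_graph_genus_le:
  assumes "2 \<le> n" "rotation_system {0..<n} (cyc_power_adj n) rho"
    and "1 - 2 * int g \<le> euler_char {0..<n} (cyc_power_adj n) rho"
    and "euler_char {0..<n} (cyc_power_adj n) rho \<le> 2"
  shows "graph_genus {0..<n} (cyc_power_adj n) \<le> g"
proof (rule graph_genus_le[OF assms(2) _ _ assms(4)])
  show "even (euler_char {0..<n} (cyc_power_adj n) rho)"
    using power_graph_euler_char(1)[OF assms(1,2)] .
  then show "2 - 2 * int g \<le> euler_char {0..<n} (cyc_power_adj n) rho"
    using assms(3) by presburger
qed

lemma power_graph_genus_ge: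
  assumes "2 \<le> n"
    and "\<And>rho. rotation_system {0..<n} (cyc_power_adj n) rho \<Longrightarrow>
      euler_char {0..<n} (cyc_power_adj n) rho \<le> 2 - 2 * int g"
  shows "g \<le> graph_genus {0..<n} (cyc_power_adj n)"
proof -
  obtain rho where "rotation_system {0..<n} (cyc_power_adj n) rho"
    using rotation_system_exists by blast
  then show ?thesis using graph_genus_ge power_graph_euler_char(1) assms by blast
qed

lemma exists_coprime_between:
  fixes n :: nat
  assumes "7 \<le> n"
  shows "\<exists>a. coprime a n \<and> 1 < a \<and> a + 1 < n"
proof (cases "odd n")
  case True
  then show ?thesis using assms by (intro exI[of _ 2]) auto
next
  case False
  then obtain m where n: "n = 2 * m" by (auto elim: evenE)
  show ?thesis
  proof (cases "even m")
    case True
    then have "coprime (m - 1) 2" "coprime (m - 1) m"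
      using n assms coprime_diff_one_left_nat[of m] by auto
    then show ?thesis using n assms by (intro exI[of _ "m - 1"]) auto
  next
    case False
    then have "coprime (m - 2) 2" using n assms by auto
    moreover have "coprime (m - 2) m"
    proof -
      have "coprime 2 m" using False by simp
      then show ?thesis using n assms gcd_diff2_nat[of 2 m] by (simp add: coprime_iff_gcd_eq_1)
    qed
    ultimately show ?thesis using n assms by (intro exI[of _ "m - 2"]) auto
  qed
qed

lemma card_darts_ge_universal:
  assumes V: "finite V" and W: "W \<subseteq> V" and sym: "\<And>u v. E u v \<Longrightarrow> E v u"
    and universal: "\<And>w y. w \<in> W \<Longrightarrow> y \<in> V \<Longrightarrow> y \<noteq> w \<Longrightarrow> E w y"
  shows "card W * (card V - 1) + (card V - card W) * card W \<le> card (darts V E)"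
proof -
  have "finite W" using V W finite_subset by blast
  have "card (Sigma W (\<lambda>w. V - {w})) = card W * (card V - 1)"
    using \<open>finite W\<close> V W by (simp add: card_SigmaI subset_iff card_Diff_singleton)
  moreover have "card ((V - W) \<times> W) = (card V - card W) * card W"
    using V \<open>finite W\<close> W by (simp add: card_cartesian_product card_Diff_subset)
  moreover have "card (Sigma W (\<lambda>w. V - {w}) \<union> (V - W) \<times> W) =
      card (Sigma W (\<lambda>w. V - {w})) + card ((V - W) \<times> W)"
    using V \<open>finite W\<close> by (intro card_Un_disjoint) auto
  moreover have "Sigma W (\<lambda>w. V - {w}) \<union> (V - W) \<times> W \<subseteq> darts V E"
  proof
    fix x assume "x \<in> Sigma W (\<lambda>w. V - {w}) \<union> (V - W) \<times> W"
    then show "x \<in> darts V E"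
    proof
      assume "x \<in> Sigma W (\<lambda>w. V - {w})"
      then show ?thesis using W universal by (auto simp: darts_def)
    next
      assume "x \<in> (V - W) \<times> W"
      then obtain y w where "x = (y, w)" "y \<in> V - W" "w \<in> W" by blast
      then show ?thesis using W universal[of w y] sym by (auto simp: darts_def)
    qed
  qed
  then have "card (Sigma W (\<lambda>w. V - {w}) \<union> (V - W) \<times> W) \<le> card (darts V E)"
    by (rule card_mono[OF finite_subset[OF _ finite_cartesian_product[OF V V]], rotated])
      (auto simp: darts_def)
  ultimately show ?thesis by linarith
qed

lemma card_darts_power_graph_ge:
  assumes "7 \<le> n"
  shows "10 * n - 30 \<le> card (darts {0..<n} (cyc_power_adj n))"
proof -
  obtain a where a: "coprime a n" "1 < a" "a + 1 < n" using exists_coprime_between[OF assms] by blast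
  have "a \<noteq> n - a"
  proof
    assume "a = n - a"
    then have "n = a * 2" by simp
    then show False using a by simp
  qed
  define W where "W = {0, 1, n - 1, a, n - a}"
  have "coprime (n - 1) n" "coprime (n - a) n"
    using a(3) gcd_diff2_nat[of a n] a(1) coprime_diff_one_left_nat[of n]
    by (auto simp: coprime_iff_gcd_eq_1)
  then have adj_W: "cyc_power_adj n w y" if "w \<in> W" "y \<in> {0..<n}" "y \<noteq> w" for w y
    using that a(1) cyc_power_adj_0 cyc_power_adj_coprime[of _ n y] unfolding W_def
    by (auto simp: cyc_power_adj_def[of n y 0])
  have W_sub: "W \<subseteq> {0..<n}" using a unfolding W_def by auto
  have "distinct [0, 1, n - 1, a, n - a]" using a assms \<open>a \<noteq> n - a\<close> by auto
  then have card_W: "card W = 5" unfolding W_def using distinct_card by fastforce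
  have sym: "cyc_power_adj n v u" if "cyc_power_adj n u v" for u v
    using that by (auto simp: cyc_power_adj_def)
  have "card W * (card {0..<n} - 1) + (card {0..<n} - card W) * card W
      \<le> card (darts {0..<n} (cyc_power_adj n))"
    by (rule card_darts_ge_universal[OF finite_atLeastLessThan W_sub sym adj_W])
  then show ?thesis using card_W by simp
qed

section \<open>Computations for small n\<close>

definition cyc_power_adj_bounded :: "nat \<Rightarrow> nat \<Rightarrow> nat \<Rightarrow> bool" where
  "cyc_power_adj_bounded n x y \<longleftrightarrow> x \<noteq> y \<and>
    ((\<exists>k\<in>set [0..<n]. y = (k * x) mod n) \<or> (\<exists>k\<in>set [0..<n]. x = (k * y) mod n))"

lemma cyc_power_adj_eq_bounded: "0 < n \<Longrightarrow> cyc_power_adj n = cyc_power_adj_bounded n"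
proof (intro ext)
  fix x y :: nat assume "0 < n"
  then have "(\<exists>k. y = (k * x) mod n) \<longleftrightarrow> (\<exists>k\<in>set [0..<n]. y = (k * x) mod n)" for x y
    by (metis atLeastLessThan_iff le0 mod_less_divisor mod_mult_left_eq set_upt)
  then show "cyc_power_adj n x y = cyc_power_adj_bounded n x y"
    unfolding cyc_power_adj_def cyc_power_adj_bounded_def by blast
qed

lemma darts_power_graph_code:
  "0 < n \<Longrightarrow> darts {0..<n} (cyc_power_adj n) =
    Set.filter (\<lambda>(u, v). cyc_power_adj_bounded n u v) (set [0..<n] \<times> set [0..<n])"
  by (auto simp: darts_def cyc_power_adj_eq_bounded)

lemma nbrs_power_graph_code:
  "0 < n \<Longrightarrow> nbrs {0..<n} (cyc_power_adj n) v = Set.filter (cyc_power_adj_bounded n v) (set [0..<n])"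
  by (auto simp: nbrs_def cyc_power_adj_eq_bounded)

lemma card_darts_power_graph_small:
  "card (darts {0..<2} (cyc_power_adj 2)) = 2"
  "card (darts {0..<3} (cyc_power_adj 3)) = 6"
  "card (darts {0..<4} (cyc_power_adj 4)) = 12"
  "card (darts {0..<5} (cyc_power_adj 5)) = 20"
  "card (darts {0..<6} (cyc_power_adj 6)) = 26"
  "card (darts {0..<7} (cyc_power_adj 7)) = 42"
  "card (darts {0..<8} (cyc_power_adj 8)) = 56"
  "card (darts {0..<9} (cyc_power_adj 9)) = 72"
  "card (darts {0..<10} (cyc_power_adj 10)) = 82"
  by (simp_all only: darts_power_graph_code zero_less_numeral) code_simp+

definition rotation_of_lists :: "nat list list \<Rightarrow> nat \<Rightarrow> nat \<Rightarrow> nat" where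
  "rotation_of_lists Ls v = cycle_of_list (Ls ! v)"

lemma rotation_system_of_lists_code:
  assumes "0 < n"
    and "\<forall>v\<in>set [0..<n]. distinct (Ls ! v) \<and> set (Ls ! v) = Set.filter (cyc_power_adj_bounded n v) (set [0..<n])"
  shows "rotation_system {0..<n} (cyc_power_adj n) (rotation_of_lists Ls)"
  unfolding rotation_of_lists_def
  by (rule rotation_system_cycle_of_list) (use assms in \<open>auto simp: nbrs_power_graph_code\<close>)

lemma num_faces_ge_code:
  assumes "2 \<le> n" "rotation_system {0..<n} (cyc_power_adj n) rho"
    and "distinct (concat (map face_darts Fs))"
    and "\<forall>f\<in>set Fs. f \<noteq> [] \<and>
      set (face_darts f) \<subseteq> Set.filter (\<lambda>(u, v). cyc_power_adj_bounded n u v) (set [0..<n] \<times> set [0..<n]) \<and>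
      map (face_perm rho) (face_darts f) = rotate1 (face_darts f)"
  shows "length Fs \<le> num_faces {0..<n} (cyc_power_adj n) rho"
proof -
  interpret rotation_system_graph "{0..<n}" "cyc_power_adj n" rho
    using power_graph_rotation_system_graph[OF assms(2)] .
  have "(0, 1) \<in> D" using assms(1) cyc_power_adj_0[of 1 n] by (simp add: darts_def)
  then have "D \<noteq> {}" by blast
  have "D = Set.filter (\<lambda>(u, v). cyc_power_adj_bounded n u v) (set [0..<n] \<times> set [0..<n])"
    using assms(1) by (simp add: darts_power_graph_code)
  then have "\<forall>c\<in>set (map face_darts Fs). c \<noteq> [] \<and> set c \<subseteq> D \<and> map (face_perm rho) c = rotate1 c"
    using assms(4) by (auto simp: face_darts_def zip_eq_Nil_iff)
  then show ?thesis using num_faces_ge_closed_walks[OF \<open>D \<noteq> {}\<close> assms(3)] by simp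
qed

text \<open>In the rotation lists, the \<open>v\<close>-th entry is the cyclic order of the neighbours of \<open>v\<close>; a face
  is listed as the cyclic sequence of vertices on its boundary.\<close>

definition Z5_rotation :: "nat list list" where
  "Z5_rotation = [[1, 3, 4, 2], [2, 4, 3, 0], [1, 0, 4, 3], [4, 2, 1, 0], [2, 0, 1, 3]]"

definition Z5_faces :: "nat list list" where
  "Z5_faces = [[0, 1, 2], [0, 2, 4], [0, 3, 4, 2, 3, 1], [0, 4, 1, 3], [1, 4, 3, 2]]"

definition Z6_rotation :: "nat list list" where
  "Z6_rotation = [[1, 4, 2, 3, 5], [2, 3, 4, 0, 5], [0, 5, 1, 4], [0, 1, 5], [1, 2, 5, 0], [4, 1, 0, 3, 2]]"

definition Z6_faces :: "nat list list" where
  "Z6_faces = [[0, 1, 5], [0, 2, 5, 4], [0, 3, 1, 4, 2], [0, 4, 1], [0, 5, 3], [1, 2, 4, 5], [1, 3, 5, 2]]"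

definition Z7_rotation :: "nat list list" where
  "Z7_rotation = [[1, 3, 2, 6, 4, 5], [2, 4, 3, 0, 5, 6], [3, 5, 4, 1, 6, 0], [4, 6, 5, 2, 0, 1],
    [5, 0, 6, 3, 1, 2], [6, 1, 0, 4, 2, 3], [0, 2, 1, 5, 3, 4]]"

definition Z7_faces :: "nat list list" where
  "Z7_faces = [[0, 1, 5], [0, 2, 3], [0, 3, 1], [0, 4, 6], [0, 5, 4], [0, 6, 2], [1, 2, 6], [1, 3, 4],
    [1, 4, 2], [1, 6, 5], [2, 4, 5], [2, 5, 3], [3, 5, 6], [3, 6, 4]]"

definition Z8_rotation :: "nat list list" where
  "Z8_rotation = [[4, 2, 6, 7, 3, 5, 1], [7, 4, 0, 5, 6, 2, 3], [0, 4, 5, 7, 3, 1, 6],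
    [7, 1, 2, 6, 4, 5, 0], [0, 1, 7, 5, 3, 6, 2], [4, 7, 2, 6, 1, 0, 3], [3, 7, 0, 2, 1, 5, 4],
    [6, 2, 5, 4, 1, 3, 0]]"

definition Z8_faces :: "nat list list" where
  "Z8_faces = [[0, 1, 5], [0, 2, 4], [0, 3, 7], [0, 4, 1], [0, 5, 3], [0, 6, 2], [0, 7, 6], [1, 2, 6],
    [1, 3, 2], [1, 4, 7], [1, 6, 5], [1, 7, 3], [2, 3, 6, 7], [2, 5, 6, 4], [2, 7, 5], [3, 4, 6],
    [3, 5, 4], [4, 5, 7]]"

lemma Z5_embedding:
  "rotation_system {0..<5} (cyc_power_adj 5) (rotation_of_lists Z5_rotation)"
  "5 \<le> num_faces {0..<5} (cyc_power_adj 5) (rotation_of_lists Z5_rotation)"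
proof -
  show rs: "rotation_system {0..<5} (cyc_power_adj 5) (rotation_of_lists Z5_rotation)"
    by (rule rotation_system_of_lists_code) code_simp+
  have "length Z5_faces \<le> num_faces {0..<5} (cyc_power_adj 5) (rotation_of_lists Z5_rotation)"
    by (rule num_faces_ge_code[OF _ rs]) code_simp+
  then show "5 \<le> num_faces {0..<5} (cyc_power_adj 5) (rotation_of_lists Z5_rotation)"
    by (simp add: Z5_faces_def)
qed

lemma Z6_embedding:
  "rotation_system {0..<6} (cyc_power_adj 6) (rotation_of_lists Z6_rotation)"
  "7 \<le> num_faces {0..<6} (cyc_power_adj 6) (rotation_of_lists Z6_rotation)"
proof -
  show rs: "rotation_system {0..<6} (cyc_power_adj 6) (rotation_of_lists Z6_rotation)"
    by (rule rotation_system_of_lists_code) code_simp+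
  have "length Z6_faces \<le> num_faces {0..<6} (cyc_power_adj 6) (rotation_of_lists Z6_rotation)"
    by (rule num_faces_ge_code[OF _ rs]) code_simp+
  then show "7 \<le> num_faces {0..<6} (cyc_power_adj 6) (rotation_of_lists Z6_rotation)"
    by (simp add: Z6_faces_def)
qed

lemma Z7_embedding:
  "rotation_system {0..<7} (cyc_power_adj 7) (rotation_of_lists Z7_rotation)"
  "14 \<le> num_faces {0..<7} (cyc_power_adj 7) (rotation_of_lists Z7_rotation)"
proof -
  show rs: "rotation_system {0..<7} (cyc_power_adj 7) (rotation_of_lists Z7_rotation)"
    by (rule rotation_system_of_lists_code) code_simp+
  have "length Z7_faces \<le> num_faces {0..<7} (cyc_power_adj 7) (rotation_of_lists Z7_rotation)"
    by (rule num_faces_ge_code[OF _ rs]) code_simp+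
  then show "14 \<le> num_faces {0..<7} (cyc_power_adj 7) (rotation_of_lists Z7_rotation)"
    by (simp add: Z7_faces_def)
qed

lemma Z8_embedding:
  "rotation_system {0..<8} (cyc_power_adj 8) (rotation_of_lists Z8_rotation)"
  "18 \<le> num_faces {0..<8} (cyc_power_adj 8) (rotation_of_lists Z8_rotation)"
proof -
  show rs: "rotation_system {0..<8} (cyc_power_adj 8) (rotation_of_lists Z8_rotation)"
    by (rule rotation_system_of_lists_code) code_simp+
  have "length Z8_faces \<le> num_faces {0..<8} (cyc_power_adj 8) (rotation_of_lists Z8_rotation)"
    by (rule num_faces_ge_code[OF _ rs]) code_simp+
  then show "18 \<le> num_faces {0..<8} (cyc_power_adj 8) (rotation_of_lists Z8_rotation)"
    by (simp add: Z8_faces_def)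
qed

section \<open>The genus of the power graph\<close>

lemma power_graph_genus_le_1_if:
  assumes n: "3 \<le> n" and rho: "rotation_system {0..<n} (cyc_power_adj n) rho"
    and "card (darts {0..<n} (cyc_power_adj n)) div 2 \<le> n + num_faces {0..<n} (cyc_power_adj n) rho + 1"
    and "6 * n \<le> card (darts {0..<n} (cyc_power_adj n)) + 12"
  shows "graph_genus {0..<n} (cyc_power_adj n) \<le> 1"
proof (rule power_graph_genus_le[OF _ rho])
  show "1 - 2 * int 1 \<le> euler_char {0..<n} (cyc_power_adj n) rho"
    using assms(3) by (simp add: euler_char_def)
  show "euler_char {0..<n} (cyc_power_adj n) rho \<le> 2"
    using power_graph_euler_char(3)[OF _ rho n] n assms(4) by simp
qed (use n in simp)

lemma power_graph_genus_le_1_upto_4: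
  assumes "0 < n" "n \<le> 4"
  shows "graph_genus {0..<n} (cyc_power_adj n) \<le> 1"
proof -
  obtain rho where rho: "rotation_system {0..<n} (cyc_power_adj n) rho"
    using rotation_system_exists by blast
  consider "n = 1" | "n = 2" | "n = 3 \<or> n = 4" using assms by linarith
  then show ?thesis
  proof cases
    case 1
    then have "darts {0..<n} (cyc_power_adj n) = {}" by (auto simp: darts_def cyc_power_adj_def)
    then have "euler_char {0..<n} (cyc_power_adj n) rho = 2"
      using 1 by (simp add: euler_char_def num_faces_def)
    then show ?thesis using graph_genus_le[OF rho] by simp
  next
    case 2
    interpret rotation_system_graph "{0..<n}" "cyc_power_adj n" rho
      using power_graph_rotation_system_graph[OF rho] .
    have "2 \<le> euler_char {0..<n} (cyc_power_adj n) rho"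
      using num_faces_ge_1 2 card_darts_power_graph_small(1) by (simp add: euler_char_def)
    moreover have "euler_char {0..<n} (cyc_power_adj n) rho \<le> 2"
      using power_graph_euler_char(2)[OF _ rho] 2 by simp
    ultimately show ?thesis using power_graph_genus_le[OF _ rho] 2 by simp
  next
    case 3
    interpret rotation_system_graph "{0..<n}" "cyc_power_adj n" rho
      using power_graph_rotation_system_graph[OF rho] .
    show ?thesis
      using power_graph_genus_le_1_if[OF _ rho] num_faces_ge_1 3 card_darts_power_graph_small(2,3)
      by auto
  qed
qed

lemma power_graph_genus_le_1:
  assumes "0 < n" "n \<le> 7"
  shows "graph_genus {0..<n} (cyc_power_adj n) \<le> 1"
proof -
  consider "n \<le> 4" | "n = 5" | "n = 6" | "n = 7" using assms by linarith
  then show ?thesis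
  proof cases
    case 1
    then show ?thesis using power_graph_genus_le_1_upto_4 assms(1) by blast
  next
    case 2
    then show ?thesis
      using power_graph_genus_le_1_if[OF _ Z5_embedding(1)] Z5_embedding(2) card_darts_power_graph_small(4)
      by simp
  next
    case 3
    then show ?thesis
      using power_graph_genus_le_1_if[OF _ Z6_embedding(1)] Z6_embedding(2) card_darts_power_graph_small(5)
      by simp
  next
    case 4
    then show ?thesis
      using power_graph_genus_le_1_if[OF _ Z7_embedding(1)] Z7_embedding(2) card_darts_power_graph_small(6)
      by simp
  qed
qed

lemma power_graph_genus_8: "graph_genus {0..<8} (cyc_power_adj 8) = 2"
proof -
  have upper: "euler_char {0..<8} (cyc_power_adj 8) rho \<le> -2"
    if "rotation_system {0..<8} (cyc_power_adj 8) rho" for rho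
  proof -
    have "6 * euler_char {0..<8} (cyc_power_adj 8) rho \<le> -8"
      using power_graph_euler_char(3)[OF _ that] card_darts_power_graph_small(7) by simp
    then show ?thesis by presburger
  qed
  have "-2 \<le> euler_char {0..<8} (cyc_power_adj 8) (rotation_of_lists Z8_rotation)"
    using Z8_embedding(2) card_darts_power_graph_small(7) by (simp add: euler_char_def)
  then have "graph_genus {0..<8} (cyc_power_adj 8) \<le> 2"
    using power_graph_genus_le[OF _ Z8_embedding(1)] upper[OF Z8_embedding(1)] by simp
  moreover have "2 \<le> graph_genus {0..<8} (cyc_power_adj 8)"
    using power_graph_genus_ge[of 8 2] upper by simp
  ultimately show ?thesis by simp
qed

lemma power_graph_genus_ge_3:
  assumes "9 \<le> n"
  shows "3 \<le> graph_genus {0..<n} (cyc_power_adj n)"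
proof (rule power_graph_genus_ge)
  have "6 * n + 13 \<le> card (darts {0..<n} (cyc_power_adj n))"
  proof (cases "n \<le> 10")
    case True
    then have "n = 9 \<or> n = 10" using assms by auto
    then show ?thesis using card_darts_power_graph_small(8,9) by auto
  next
    case False
    then show ?thesis using card_darts_power_graph_ge[of n] by simp
  qed
  moreover fix rho assume rho: "rotation_system {0..<n} (cyc_power_adj n) rho"
  ultimately have "6 * euler_char {0..<n} (cyc_power_adj n) rho \<le> -13"
    using power_graph_euler_char(3)[OF _ rho] assms by simp
  moreover have "even (euler_char {0..<n} (cyc_power_adj n) rho)"
    using power_graph_euler_char(1)[OF _ rho] assms by simp
  ultimately show "euler_char {0..<n} (cyc_power_adj n) rho \<le> 2 - 2 * int 3" by presburger
qed (use assms in simp)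

theorem lemma4p1:
  fixes n :: nat
  assumes "n > 0"
  shows "(graph_genus {0..<n} (cyc_power_adj n) = 2 \<longleftrightarrow> n = 8) \<and>
         (n \<ge> 9 \<longrightarrow> graph_genus {0..<n} (cyc_power_adj n) \<ge> 3)"
proof -
  consider "n \<le> 7" | "n = 8" | "9 \<le> n" by linarith
  then show ?thesis
  proof cases
    case 1
    then show ?thesis using power_graph_genus_le_1[OF assms] by fastforce
  next
    case 2
    then show ?thesis using power_graph_genus_8 by simp
  next
    case 3
    then show ?thesis using power_graph_genus_ge_3 by fastforce
  qed
qed

end
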